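(* Let $f=a_dx^d+\dots+a_0\in\mathbb Z[x]$ be the associated polynomial of a cyclic expansive automorphism of a compact connected abelian group, assumed irreducible, and let $\beta$ be a root of $f$. Then $f$ is monic up to a sign (i.e. $a_d=\pm1$) if and only if all unstable prime divisors of $\mathbb Q(\beta)$ are archimedean.
   Context: The associated polynomial is primitive with $a_0\ne0$, $a_d>0$, and hyperbolic. A prime divisor (place) $P$ of $\mathbb Q(\beta)$ is unstable if $\beta^n\to0$ as $n\to-\infty$ in the $P$-topology. *)

theory Defs
  imports "HOL-Computational_Algebra.Computational_Algebra"
begin

definition rat_field_gen :: "complex \<Rightarrow> complex set" where
  "rat_field_gen \<beta> =
     {poly (map_poly of_rat p) \<beta> / poly (map_poly of_rat q) \<beta> | p q :: rat poly.
        poly (map_poly of_rat q) \<beta> \<noteq> 0}"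

text \<open>A (nontrivial) absolute value on a subfield K of the complex numbers.
  Places (prime divisors) are equivalence classes of these.\<close>
definition abs_value_on :: "complex set \<Rightarrow> (complex \<Rightarrow> real) \<Rightarrow> bool" where
  "abs_value_on K v \<longleftrightarrow>
     (\<forall>x\<in>K. v x \<ge> 0 \<and> (v x = 0 \<longleftrightarrow> x = 0)) \<and>
     (\<forall>x\<in>K. \<forall>y\<in>K. v (x * y) = v x * v y) \<and>
     (\<forall>x\<in>K. \<forall>y\<in>K. v (x + y) \<le> v x + v y) \<and>
     (\<exists>x\<in>K. x \<noteq> 0 \<and> v x \<noteq> 1)"

definition archimedean_on :: "complex set \<Rightarrow> (complex \<Rightarrow> real) \<Rightarrow> bool" where
  "archimedean_on K v \<longleftrightarrow> \<not> (\<forall>x\<in>K. \<forall>y\<in>K. v (x + y) \<le> max (v x) (v y))"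

text \<open>Unstable place: beta^n \<rightarrow> 0 as n \<rightarrow> -\<infinity> in the v-topology,
  i.e. v(beta^(-n)) \<rightarrow> 0 as n \<rightarrow> +\<infinity>.\<close>
definition unstable_at :: "complex \<Rightarrow> (complex \<Rightarrow> real) \<Rightarrow> bool" where
  "unstable_at \<beta> v \<longleftrightarrow> (\<lambda>n::nat. v (inverse \<beta> ^ n)) \<longlonglongrightarrow> 0"

definition hyperbolic_poly :: "int poly \<Rightarrow> bool" where
  "hyperbolic_poly f \<longleftrightarrow> (\<forall>z::complex. poly (map_poly of_int f) z = 0 \<longrightarrow> cmod z \<noteq> 1)"

end

(* If a_d = 1 or a_d = -1 then beta is integral over Z, so a non-archimedean absolute value v
   satisfies v(beta) <= 1, and beta^n cannot tend to 0 as n -> -oo.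

   Conversely, let a prime p divide a_d and put gamma = 1/beta. Since a_d is the constant term
   of the reversed polynomial, 1 does not lie in the ideal (p, gamma) of Z[gamma], and
   Chevalley's argument extends Z[gamma] to a valuation ring V of C in which p and gamma are
   non-units. Measuring elements against powers of p, w(x) = sup {k/e. x^e / p^k in V} is a
   real valuation on Q(beta)^*: it is finite there because Q(beta) = Q[beta] and a_d beta lies
   in V, and w(gamma) > 0 because f is primitive. Hence 2^(-w) is a non-archimedean absolute
   value on Q(beta) at which beta is unstable. *)

theory Submission imports Defs "HOL-Computational_Algebra.Field_as_Ring" begin

lemma map_poly_of_int_add:
  "map_poly (of_int :: int \<Rightarrow> 'a::comm_ring_1) (p + q) = map_poly of_int p + map_poly of_int q"
  by (rule poly_eqI) (simp add: coeff_map_poly)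

lemma map_poly_of_int_mult:
  "map_poly (of_int :: int \<Rightarrow> 'a::comm_ring_1) (p * q) = map_poly of_int p * map_poly of_int q"
  by (rule poly_eqI) (simp add: coeff_map_poly coeff_mult)

lemma map_poly_of_int_smult:
  "map_poly (of_int :: int \<Rightarrow> 'a::comm_ring_1) (smult c q) = smult (of_int c) (map_poly of_int q)"
  by (rule poly_eqI) (simp add: coeff_map_poly)

lemma map_poly_of_int_diff:
  "map_poly (of_int :: int \<Rightarrow> 'a::comm_ring_1) (p - q) = map_poly of_int p - map_poly of_int q"
  by (rule poly_eqI) (simp add: coeff_map_poly)

lemma map_poly_of_int_reflect_poly:
  "map_poly (of_int :: int \<Rightarrow> 'a::{comm_ring_1,ring_char_0}) (reflect_poly q) =
   reflect_poly (map_poly of_int q)"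
  by (rule poly_eqI) (simp add: coeff_map_poly coeff_reflect_poly degree_map_poly)

lemma map_poly_of_rat_add:
  "map_poly (of_rat :: rat \<Rightarrow> 'a::field_char_0) (p + q) = map_poly of_rat p + map_poly of_rat q"
  by (rule poly_eqI) (simp add: coeff_map_poly of_rat_add)

lemma map_poly_of_rat_uminus:
  "map_poly (of_rat :: rat \<Rightarrow> 'a::field_char_0) (- p) = - map_poly of_rat p"
  by (rule poly_eqI) (simp add: coeff_map_poly of_rat_minus)

lemma map_poly_of_rat_mult:
  "map_poly (of_rat :: rat \<Rightarrow> 'a::field_char_0) (p * q) = map_poly of_rat p * map_poly of_rat q"
  by (rule poly_eqI) (simp add: coeff_map_poly coeff_mult of_rat_sum of_rat_mult)

lemma map_poly_of_rat_smult:
  "map_poly (of_rat :: rat \<Rightarrow> 'a::field_char_0) (smult c q) = smult (of_rat c) (map_poly of_rat q)"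
  by (rule poly_eqI) (simp add: coeff_map_poly of_rat_mult)

lemma poly_map_poly_of_int_eq_sum:
  "poly (map_poly (of_int :: int \<Rightarrow> 'a::{comm_ring_1,ring_char_0}) P) x =
   (\<Sum>i\<le>degree P. of_int (coeff P i) * x ^ i)"
  by (simp add: poly_altdef coeff_map_poly degree_map_poly)

lemma nonzero_root_if_coeff_0_nonzero:
  fixes \<beta> :: "'a::{comm_ring_1,ring_char_0}"
  shows "coeff f 0 \<noteq> 0 \<Longrightarrow> poly (map_poly of_int f) \<beta> = 0 \<Longrightarrow> \<beta> \<noteq> 0"
  by (auto simp: poly_0_coeff_0 coeff_map_poly)

section \<open>Subrings and ideals with two generators\<close>

locale subring =
  fixes R :: "'a::comm_ring_1 set"
  assumes one_mem: "1 \<in> R"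
    and add_mem: "x \<in> R \<Longrightarrow> y \<in> R \<Longrightarrow> x + y \<in> R"
    and mult_mem: "x \<in> R \<Longrightarrow> y \<in> R \<Longrightarrow> x * y \<in> R"
    and uminus_mem: "x \<in> R \<Longrightarrow> - x \<in> R"
begin

lemma zero_mem: "0 \<in> R"
  using add_mem[OF one_mem uminus_mem[OF one_mem]] by simp

lemma diff_mem: "x \<in> R \<Longrightarrow> y \<in> R \<Longrightarrow> x - y \<in> R"
  using add_mem[OF _ uminus_mem, of x y] by simp

lemma of_nat_mem: "of_nat n \<in> R"
  by (induction n) (auto intro: zero_mem one_mem add_mem)

lemma of_int_mem: "of_int n \<in> R"
proof (cases "n \<ge> 0")
  case True
  then show ?thesis using of_nat_mem[of "nat n"] by simp
next
  case False
  then show ?thesis using uminus_mem[OF of_nat_mem[of "nat (- n)"]] by simp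
qed


lemma power_mem: "x \<in> R \<Longrightarrow> x ^ n \<in> R"
  by (induction n) (auto intro: one_mem mult_mem)

lemma sum_mem: "(\<And>i. i \<in> A \<Longrightarrow> h i \<in> R) \<Longrightarrow> sum h A \<in> R"
  by (induction A rule: infinite_finite_induct) (auto intro: zero_mem add_mem)

lemma poly_mem: "(\<And>i. coeff A i \<in> R) \<Longrightarrow> y \<in> R \<Longrightarrow> poly A y \<in> R"
  unfolding poly_altdef by (intro sum_mem mult_mem power_mem) auto

end

lemma chain_Union_common_member:
  assumes "\<And>W W'. W \<in> C \<Longrightarrow> W' \<in> C \<Longrightarrow> W \<subseteq> W' \<or> W' \<subseteq> W"
    and "x \<in> \<Union>C" "y \<in> \<Union>C"
  obtains W where "W \<in> C" "x \<in> W" "y \<in> W"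
  using assms by blast

lemma subring_Ints: "subring \<int>"
  by unfold_locales simp_all

lemma subring_Union_chain:
  assumes "C \<noteq> {}" "\<And>W. W \<in> C \<Longrightarrow> subring W"
    and chain: "\<And>W W'. W \<in> C \<Longrightarrow> W' \<in> C \<Longrightarrow> W \<subseteq> W' \<or> W' \<subseteq> W"
  shows "subring (\<Union>C)"
proof
  show "1 \<in> \<Union>C" using assms(1,2) subring.one_mem by blast
  show "x + y \<in> \<Union>C" if "x \<in> \<Union>C" "y \<in> \<Union>C" for x y
    using chain_Union_common_member[OF chain that] assms(2) by (metis UnionI subring.add_mem)
  show "x * y \<in> \<Union>C" if "x \<in> \<Union>C" "y \<in> \<Union>C" for x y
    using chain_Union_common_member[OF chain that] assms(2) by (metis UnionI subring.mult_mem)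
  show "- x \<in> \<Union>C" if "x \<in> \<Union>C" for x
    using that assms(2) subring.uminus_mem by blast
qed

definition pair_ideal :: "'a::comm_ring_1 set \<Rightarrow> 'a \<Rightarrow> 'a \<Rightarrow> 'a set" where
  "pair_ideal R a b = {x * a + y * b | x y. x \<in> R \<and> y \<in> R}"

lemma pair_ideal_iff: "x \<in> pair_ideal R a b \<longleftrightarrow> (\<exists>u\<in>R. \<exists>w\<in>R. x = u * a + w * b)"
  unfolding pair_ideal_def by auto

definition poly_adjoin :: "'a::comm_ring_1 set \<Rightarrow> 'a \<Rightarrow> 'a set" where
  "poly_adjoin R y = {poly A y | A. \<forall>i. coeff A i \<in> R}"

context subring
begin

lemma pair_ideal_zero: "0 \<in> pair_ideal R a b"
  unfolding pair_ideal_def using zero_mem by force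

lemma pair_ideal_left: "a \<in> pair_ideal R a b"
  unfolding pair_ideal_def using zero_mem one_mem by force

lemma pair_ideal_right: "b \<in> pair_ideal R a b"
  unfolding pair_ideal_def using zero_mem one_mem by force

lemma pair_ideal_add:
  assumes "x \<in> pair_ideal R a b" "y \<in> pair_ideal R a b" shows "x + y \<in> pair_ideal R a b"
proof -
  obtain x1 x2 y1 y2 where "x1 \<in> R" "x2 \<in> R" "y1 \<in> R" "y2 \<in> R"
    and "x = x1 * a + x2 * b" "y = y1 * a + y2 * b"
    using assms unfolding pair_ideal_def by blast
  then show ?thesis unfolding pair_ideal_def
    by (intro CollectI exI[of _ "x1 + y1"] exI[of _ "x2 + y2"]) (auto intro: add_mem simp: algebra_simps)
qed

lemma pair_ideal_mult:
  assumes "r \<in> R" "x \<in> pair_ideal R a b" shows "r * x \<in> pair_ideal R a b"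
proof -
  obtain x1 x2 where "x1 \<in> R" "x2 \<in> R" "x = x1 * a + x2 * b"
    using assms(2) unfolding pair_ideal_def by blast
  then show ?thesis unfolding pair_ideal_def using assms(1)
    by (intro CollectI exI[of _ "r * x1"] exI[of _ "r * x2"]) (auto intro: mult_mem simp: algebra_simps)
qed

lemma pair_ideal_subset: "a \<in> R \<Longrightarrow> b \<in> R \<Longrightarrow> pair_ideal R a b \<subseteq> R"
  unfolding pair_ideal_def by (auto intro!: add_mem mult_mem)

lemma pair_ideal_sum:
  "(\<And>i. i \<in> A \<Longrightarrow> h i \<in> pair_ideal R a b) \<Longrightarrow> sum h A \<in> pair_ideal R a b"
  by (induction A rule: infinite_finite_induct) (auto intro: pair_ideal_zero pair_ideal_add)

lemma pair_ideal_poly: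
  "(\<And>i. coeff A i \<in> pair_ideal R a b) \<Longrightarrow> y \<in> R \<Longrightarrow> poly A y \<in> pair_ideal R a b"
  unfolding poly_altdef by (intro pair_ideal_sum) (metis pair_ideal_mult mult.commute power_mem)

lemma subset_poly_adjoin: "R \<subseteq> poly_adjoin R y"
proof
  fix x assume "x \<in> R"
  then have "\<forall>i. coeff [:x:] i \<in> R" using zero_mem by (auto simp: coeff_pCons split: nat.splits)
  then show "x \<in> poly_adjoin R y" unfolding poly_adjoin_def by force
qed

lemma mem_poly_adjoin: "y \<in> poly_adjoin R y"
proof -
  have "\<forall>i. coeff [:0, 1:] i \<in> R" using zero_mem one_mem by (auto simp: coeff_pCons split: nat.splits)
  then show ?thesis unfolding poly_adjoin_def by force
qed

lemma subring_poly_adjoin: "subring (poly_adjoin R y)"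
proof
  show "1 \<in> poly_adjoin R y" using subset_poly_adjoin one_mem by blast
next
  fix u v assume "u \<in> poly_adjoin R y" "v \<in> poly_adjoin R y"
  then obtain A B where A: "\<forall>i. coeff A i \<in> R" "u = poly A y" and B: "\<forall>i. coeff B i \<in> R" "v = poly B y"
    unfolding poly_adjoin_def by blast
  have "\<forall>i. coeff (A + B) i \<in> R" "\<forall>i. coeff (A * B) i \<in> R"
    using A B unfolding coeff_mult by (auto intro!: add_mem sum_mem mult_mem)
  moreover have "u + v = poly (A + B) y" "u * v = poly (A * B) y" using A B by simp_all
  ultimately show "u + v \<in> poly_adjoin R y" "u * v \<in> poly_adjoin R y"
    unfolding poly_adjoin_def by blast+
next
  fix u assume "u \<in> poly_adjoin R y"
  then obtain A where A: "\<forall>i. coeff A i \<in> R" "u = poly A y" unfolding poly_adjoin_def by blast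
  then have "\<forall>i. coeff (- A) i \<in> R" by (auto intro: uminus_mem)
  then show "- u \<in> poly_adjoin R y" unfolding poly_adjoin_def A by (auto intro!: exI[of _ "- A"])
qed

end

lemma rat_field_gen_iff:
  "x \<in> rat_field_gen b \<longleftrightarrow> (\<exists>p q. poly (map_poly of_rat q) b \<noteq> 0 \<and>
     x = poly (map_poly of_rat p) b / poly (map_poly of_rat q) b)"
  unfolding rat_field_gen_def by blast

lemma of_rat_mem_rat_field_gen: "of_rat c \<in> rat_field_gen b"
  unfolding rat_field_gen_iff by (intro exI[of _ "[:c:]"] exI[of _ 1]) (simp add: map_poly_pCons)

lemma generator_mem_rat_field_gen: "b \<in> rat_field_gen b"
  unfolding rat_field_gen_iff by (intro exI[of _ "[:0, 1:]"] exI[of _ 1]) (simp add: map_poly_pCons)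

lemma inverse_mem_rat_field_gen:
  assumes "x \<in> rat_field_gen b" shows "inverse x \<in> rat_field_gen b"
proof (cases "x = 0")
  case True
  then show ?thesis using of_rat_mem_rat_field_gen[of 0] by simp
next
  case False
  obtain p q where "poly (map_poly of_rat q) b \<noteq> 0" "x = poly (map_poly of_rat p) b / poly (map_poly of_rat q) b"
    using assms unfolding rat_field_gen_iff by blast
  with False show ?thesis unfolding rat_field_gen_iff by (intro exI[of _ q] exI[of _ p]) simp
qed

lemma subring_rat_field_gen: "subring (rat_field_gen b)"
proof
  show "1 \<in> rat_field_gen b" using of_rat_mem_rat_field_gen[of 1] by simp
next
  fix x y assume "x \<in> rat_field_gen b" "y \<in> rat_field_gen b"
  then obtain p q p' q' where q: "poly (map_poly of_rat q) b \<noteq> 0" "poly (map_poly of_rat q') b \<noteq> 0"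
    and x: "x = poly (map_poly of_rat p) b / poly (map_poly of_rat q) b"
    and y: "y = poly (map_poly of_rat p') b / poly (map_poly of_rat q') b"
    unfolding rat_field_gen_iff by blast
  show "x + y \<in> rat_field_gen b" unfolding rat_field_gen_iff
    using q by (intro exI[of _ "p * q' + p' * q"] exI[of _ "q * q'"])
      (simp add: x y map_poly_of_rat_add map_poly_of_rat_mult add_frac_eq)
  show "x * y \<in> rat_field_gen b" unfolding rat_field_gen_iff
    using q by (intro exI[of _ "p * p'"] exI[of _ "q * q'"]) (simp add: x y map_poly_of_rat_mult)
next
  fix x assume "x \<in> rat_field_gen b"
  then obtain p q where q: "poly (map_poly of_rat q) b \<noteq> 0"
    and x: "x = poly (map_poly of_rat p) b / poly (map_poly of_rat q) b"
    unfolding rat_field_gen_iff by blast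
  have "- x = poly (map_poly of_rat (- p)) b / poly (map_poly of_rat q) b"
    by (simp add: x map_poly_of_rat_uminus)
  then show "- x \<in> rat_field_gen b" using q unfolding rat_field_gen_iff by blast
qed

interpretation rat_field_gen: subring "rat_field_gen b"
  by (rule subring_rat_field_gen)

lemma inverse_poly_value_eq_poly_value:
  fixes b :: "'a::field_char_0"
  assumes F: "F \<noteq> 0" "poly (map_poly of_rat F) b = 0" and q: "poly (map_poly of_rat q) b \<noteq> 0"
  obtains t where "inverse (poly (map_poly of_rat q) b) = poly (map_poly of_rat t) b"
proof -
  define ev where "ev H = poly (map_poly (of_rat :: rat \<Rightarrow> 'a) H) b" for H
  have ev_mult: "ev (A * B) = ev A * ev B" and ev_add: "ev (A + B) = ev A + ev B" for A B
    by (simp_all add: ev_def map_poly_of_rat_mult map_poly_of_rat_add)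
  have "\<exists>m. (m \<noteq> 0 \<and> ev m = 0) \<and> (\<forall>H. H \<noteq> 0 \<and> ev H = 0 \<longrightarrow> degree m \<le> degree H)"
    by (rule ex_has_least_nat) (use F in \<open>simp add: ev_def\<close>)
  then obtain m where m: "m \<noteq> 0" "ev m = 0"
    and m_min: "\<And>H. H \<noteq> 0 \<Longrightarrow> ev H = 0 \<Longrightarrow> degree m \<le> degree H"
    by blast
  obtain s t where st: "bezout_coefficients m q = (s, t)" by (cases "bezout_coefficients m q")
  define d where "d = gcd m q"
  have "s * m + t * q = d" using bezout_coefficients[OF st] d_def by simp
  then have bezout: "ev s * ev m + ev t * ev q = ev d" by (simp flip: ev_add ev_mult)
  obtain e where e: "m = d * e" using d_def by (metis dvdE gcd_dvd1)
  obtain h where "q = d * h" using d_def by (metis dvdE gcd_dvd2)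
  then have "ev d \<noteq> 0" using q ev_mult ev_def by auto
  then have "ev e = 0" "e \<noteq> 0" using m e ev_mult by auto
  then have "degree d = 0"
    using m_min[of e] m e by (auto simp: degree_mult_eq)
  then obtain c where c: "d = [:c:]" by (metis degree_eq_zeroE)
  have "c \<noteq> 0" using c \<open>ev d \<noteq> 0\<close> ev_def by auto
  have "ev t * ev q = of_rat c" using bezout m c ev_def by (simp add: map_poly_pCons)
  then have "inverse (ev q) = ev (smult (inverse c) t)"
    using \<open>c \<noteq> 0\<close> q by (simp add: ev_def map_poly_of_rat_smult field_simps of_rat_divide)
  then show ?thesis using that unfolding ev_def by blast
qed

lemma rat_field_gen_eq_poly_value:
  assumes "F \<noteq> 0" "poly (map_poly of_rat F) b = 0" and "x \<in> rat_field_gen b"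
  obtains H where "x = poly (map_poly of_rat H) b"
proof -
  obtain p q where q: "poly (map_poly of_rat q) b \<noteq> 0"
    and x: "x = poly (map_poly of_rat p) b / poly (map_poly of_rat q) b"
    using assms(3) unfolding rat_field_gen_iff by blast
  obtain t where "inverse (poly (map_poly of_rat q) b) = poly (map_poly of_rat t) b"
    using inverse_poly_value_eq_poly_value[OF assms(1,2) q] .
  then have "x = poly (map_poly of_rat (p * t)) b"
    by (simp add: x divide_inverse map_poly_of_rat_mult)
  then show ?thesis using that by blast
qed

context
  fixes K :: "complex set" and v :: "complex \<Rightarrow> real"
  assumes K: "subring K" and v: "abs_value_on K v"
begin

lemma abs_value_nonneg: "x \<in> K \<Longrightarrow> 0 \<le> v x"
  using v unfolding abs_value_on_def by blast

lemma abs_value_eq_0_iff: "x \<in> K \<Longrightarrow> v x = 0 \<longleftrightarrow> x = 0"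
  using v unfolding abs_value_on_def by blast

lemma abs_value_mult: "x \<in> K \<Longrightarrow> y \<in> K \<Longrightarrow> v (x * y) = v x * v y"
  using v unfolding abs_value_on_def by blast

lemma abs_value_one: "v 1 = 1"
proof -
  have "v 1 = v 1 * v 1" using abs_value_mult subring.one_mem[OF K] by fastforce
  moreover have "v 1 \<noteq> 0" using abs_value_eq_0_iff subring.one_mem[OF K] by simp
  ultimately show ?thesis by simp
qed

lemma abs_value_minus_one: "v (- 1) = 1"
proof -
  have "- 1 \<in> K" using subring.of_int_mem[OF K, of "- 1"] by simp
  then have "v (- 1) * v (- 1) = 1" and "0 \<le> v (- 1)"
    using abs_value_mult[of "- 1" "- 1"] abs_value_one abs_value_nonneg by auto
  then show ?thesis by (metis abs_of_nonneg abs_square_eq_1 power2_eq_square)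
qed

lemma abs_value_power: "x \<in> K \<Longrightarrow> v (x ^ n) = v x ^ n"
  by (induction n) (simp_all add: abs_value_one abs_value_mult subring.power_mem[OF K])

lemma abs_value_uminus: "x \<in> K \<Longrightarrow> v (- x) = v x"
  using abs_value_mult[of "- 1" x] subring.of_int_mem[OF K, of "- 1"] abs_value_minus_one by simp

lemma unstable_at_iff_abs_value_gt_one:
  assumes "\<beta> \<in> K" "inverse \<beta> \<in> K" "\<beta> \<noteq> 0"
  shows "unstable_at \<beta> v \<longleftrightarrow> 1 < v \<beta>"
proof -
  have "v \<beta> * v (inverse \<beta>) = 1"
    using abs_value_mult[OF assms(1,2)] assms(3) abs_value_one by simp
  then have inv: "v (inverse \<beta>) = inverse (v \<beta>)" by (rule inverse_unique[symmetric])
  have pos: "0 < v \<beta>" using abs_value_nonneg abs_value_eq_0_iff assms by force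
  have "unstable_at \<beta> v \<longleftrightarrow> (\<lambda>n. inverse (v \<beta>) ^ n) \<longlonglongrightarrow> 0"
    unfolding unstable_at_def abs_value_power[OF assms(2)] inv ..
  also have "\<dots> \<longleftrightarrow> 1 < v \<beta>"
  proof
    assume lim: "(\<lambda>n. inverse (v \<beta>) ^ n) \<longlonglongrightarrow> 0"
    show "1 < v \<beta>"
    proof (rule ccontr)
      assume "\<not> 1 < v \<beta>"
      then have "1 \<le> inverse (v \<beta>) ^ n" for n using pos by (simp add: one_le_inverse)
      then have "1 \<le> (0::real)" using LIMSEQ_le_const[OF lim] by blast
      then show False by simp
    qed
  next
    assume "1 < v \<beta>"
    then show "(\<lambda>n. inverse (v \<beta>) ^ n) \<longlonglongrightarrow> 0" using pos
      by (intro LIMSEQ_power_zero) (simp add: inverse_less_1_iff)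
  qed
  finally show ?thesis .
qed

context
  assumes nonarch: "\<not> archimedean_on K v"
begin

lemma abs_value_ultrametric: "x \<in> K \<Longrightarrow> y \<in> K \<Longrightarrow> v (x + y) \<le> max (v x) (v y)"
  using nonarch unfolding archimedean_on_def by blast

lemma abs_value_of_nat_le_one: "v (of_nat m) \<le> 1"
proof (induction m)
  case 0
  then show ?case using abs_value_eq_0_iff[OF subring.zero_mem[OF K]] by simp
next
  case (Suc m)
  then show ?case
    using abs_value_ultrametric[OF subring.of_nat_mem[OF K] subring.one_mem[OF K], of m]
    by (simp add: abs_value_one add.commute)
qed

lemma abs_value_of_int_le_one: "v (of_int n) \<le> 1"
proof (cases "n \<ge> 0")
  case True
  then show ?thesis using abs_value_of_nat_le_one[of "nat n"] by simp
next
  case False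
  then have "of_int n = - (of_nat (nat (- n)) :: complex)" by simp
  then show ?thesis
    using abs_value_uminus[OF subring.of_nat_mem[OF K]] abs_value_of_nat_le_one by simp
qed

lemma abs_value_int_sum_le:
  assumes "\<beta> \<in> K" "1 \<le> v \<beta>"
  shows "v (\<Sum>i\<le>n. of_int (a i) * \<beta> ^ i) \<le> v \<beta> ^ n"
proof (induction n)
  case 0
  then show ?case using abs_value_of_int_le_one by simp
next
  case (Suc n)
  have mem: "of_int (a i) * \<beta> ^ i \<in> K" for i
    using assms(1) K by (intro subring.mult_mem subring.of_int_mem subring.power_mem)
  have "v (\<Sum>i\<le>Suc n. of_int (a i) * \<beta> ^ i) =
        v ((\<Sum>i\<le>n. of_int (a i) * \<beta> ^ i) + of_int (a (Suc n)) * \<beta> ^ Suc n)"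
    by simp
  also have "\<dots> \<le> max (v (\<Sum>i\<le>n. of_int (a i) * \<beta> ^ i)) (v (of_int (a (Suc n)) * \<beta> ^ Suc n))"
    using abs_value_ultrametric[OF subring.sum_mem[OF K mem] mem] .
  also have "\<dots> \<le> v \<beta> ^ Suc n"
  proof (rule max.boundedI)
    have "v \<beta> ^ n \<le> v \<beta> ^ Suc n" using assms(2) by (intro power_increasing) simp_all
    then show "v (\<Sum>i\<le>n. of_int (a i) * \<beta> ^ i) \<le> v \<beta> ^ Suc n" using Suc by linarith
    have "v (of_int (a (Suc n)) * \<beta> ^ Suc n) = v (of_int (a (Suc n))) * v \<beta> ^ Suc n"
      using abs_value_mult[OF subring.of_int_mem[OF K] subring.power_mem[OF K assms(1)]]
        abs_value_power[OF assms(1)] by (simp del: power_Suc)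
    also have "\<dots> \<le> v \<beta> ^ Suc n"
      using abs_value_of_int_le_one[of "a (Suc n)"] abs_value_nonneg[OF subring.of_int_mem[OF K]] assms(2)
      by (intro mult_left_le_one_le) auto
    finally show "v (of_int (a (Suc n)) * \<beta> ^ Suc n) \<le> v \<beta> ^ Suc n" .
  qed
  finally show ?case .
qed

lemma abs_value_le_one_of_root_of_unit_lead_coeff:
  assumes lc: "lead_coeff f = 1 \<or> lead_coeff f = -1"
    and root: "poly (map_poly of_int f) \<beta> = 0" and "\<beta> \<in> K"
  shows "v \<beta> \<le> 1"
proof (rule ccontr)
  assume "\<not> v \<beta> \<le> 1"
  then have gt: "1 < v \<beta>" by simp
  define d where "d = degree f"
  have "d \<noteq> 0"
  proof
    assume "d = 0"
    then have "poly (map_poly (of_int :: int \<Rightarrow> complex) f) \<beta> = of_int (lead_coeff f)"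
      by (simp add: poly_map_poly_of_int_eq_sum d_def)
    then show False using root lc by auto
  qed
  then obtain n where d: "d = Suc n" using not0_implies_Suc by blast
  have "0 = (\<Sum>i\<le>n. of_int (coeff f i) * \<beta> ^ i) + of_int (lead_coeff f) * \<beta> ^ d"
    using root by (simp add: poly_map_poly_of_int_eq_sum d_def[symmetric] d)
  then have eq: "of_int (lead_coeff f) * \<beta> ^ d = - (\<Sum>i\<le>n. of_int (coeff f i) * \<beta> ^ i)"
    by (simp add: eq_neg_iff_add_eq_0 add.commute)
  have mem: "of_int m * \<beta> ^ i \<in> K" for m i
    using \<open>\<beta> \<in> K\<close> K by (intro subring.mult_mem subring.of_int_mem subring.power_mem)
  have "v (of_int (lead_coeff f)) = 1"
    using lc abs_value_one abs_value_minus_one by auto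
  then have "v \<beta> ^ d = v (of_int (lead_coeff f) * \<beta> ^ d)"
    using abs_value_mult[OF subring.of_int_mem[OF K] subring.power_mem[OF K \<open>\<beta> \<in> K\<close>]]
      abs_value_power[OF \<open>\<beta> \<in> K\<close>] by simp
  also have "\<dots> = v (\<Sum>i\<le>n. of_int (coeff f i) * \<beta> ^ i)"
    unfolding eq by (rule abs_value_uminus[OF subring.sum_mem[OF K mem]])
  also have "\<dots> \<le> v \<beta> ^ n" using abs_value_int_sum_le \<open>\<beta> \<in> K\<close> gt by simp
  finally show False using gt d by simp
qed

end

end

section \<open>Chevalley's extension theorem\<close>

lemma degree_less_if_top_coeff_zero:
  "degree p \<le> n \<Longrightarrow> coeff p n = 0 \<Longrightarrow> 0 < n \<Longrightarrow> degree p < n"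
  by (cases "p = 0") (auto simp: le_less)

(* Maximality forces every element outside V to satisfy a polynomial relation with
   coefficients in the ideal (a, b); comparing such relations for x and 1/x shows that V
   is a valuation ring. *)
locale maximal_avoiding_subring = subring V for V :: "'a::field set" +
  fixes a b :: 'a
  assumes a_mem: "a \<in> V" and b_mem: "b \<in> V"
    and one_not_mem_ideal: "1 \<notin> pair_ideal V a b"
    and maximal: "\<And>W. subring W \<Longrightarrow> V \<subseteq> W \<Longrightarrow> 1 \<notin> pair_ideal W a b \<Longrightarrow> W = V"
begin

abbreviation I :: "'a set" where "I \<equiv> pair_ideal V a b"

lemma ideal_subset: "x \<in> I \<Longrightarrow> x \<in> V"
  using pair_ideal_subset[OF a_mem b_mem] by blast

lemma ideal_relation_if_not_mem:
  assumes "y \<notin> V"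
  obtains A where "\<forall>i. coeff A i \<in> I" "poly A y = 1"
proof -
  have "1 \<in> pair_ideal (poly_adjoin V y) a b"
  proof (rule ccontr)
    assume "1 \<notin> pair_ideal (poly_adjoin V y) a b"
    then have "poly_adjoin V y = V" by (rule maximal[OF subring_poly_adjoin subset_poly_adjoin])
    then show False using mem_poly_adjoin assms by blast
  qed
  then obtain u w where u: "u \<in> poly_adjoin V y" and w: "w \<in> poly_adjoin V y" and "1 = u * a + w * b"
    unfolding pair_ideal_iff by blast
  moreover obtain U where U: "\<forall>i. coeff U i \<in> V" "u = poly U y" using u unfolding poly_adjoin_def by blast
  moreover obtain W where W: "\<forall>i. coeff W i \<in> V" "w = poly W y" using w unfolding poly_adjoin_def by blast
  ultimately have "poly (smult a U + smult b W) y = 1" by (simp add: mult.commute)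
  moreover have "coeff (smult a U + smult b W) i \<in> I" for i
  proof -
    have "coeff (smult a U + smult b W) i = coeff U i * a + coeff W i * b" by (simp add: mult.commute)
    then show ?thesis unfolding pair_ideal_iff using U W by blast
  qed
  ultimately show ?thesis using that by blast
qed

lemma inverse_one_minus_mem:
  assumes x: "x \<in> I" shows "inverse (1 - x) \<in> V"
proof (rule ccontr)
  assume "inverse (1 - x) \<notin> V"
  then obtain A where A: "\<forall>i. coeff A i \<in> I" "poly A (inverse (1 - x)) = 1"
    using ideal_relation_if_not_mem by blast
  have x1: "1 - x \<noteq> 0" using x one_not_mem_ideal by auto
  have "1 - x \<in> V" using diff_mem[OF one_mem ideal_subset[OF x]] .
  then have "poly (reflect_poly A) (1 - x) \<in> I"
    using A(1) pair_ideal_zero by (intro pair_ideal_poly) (auto simp: coeff_reflect_poly)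
  moreover have "poly (reflect_poly A) (1 - x) = (1 - x) ^ degree A"
    using poly_reflect_poly_nz[OF x1, of A] A(2) by simp
  moreover have "1 - (1 - x) ^ n \<in> I" for n
  proof (induction n)
    case 0
    then show ?case using pair_ideal_zero by simp
  next
    case (Suc n)
    have "1 - (1 - x) ^ Suc n = (1 - (1 - x) ^ n) + (1 - x) ^ n * x" by (simp add: algebra_simps)
    also have "\<dots> \<in> I"
      using pair_ideal_add[OF Suc pair_ideal_mult[OF power_mem[OF \<open>1 - x \<in> V\<close>] x]] .
    finally show ?case .
  qed
  ultimately have "(1 - (1 - x) ^ degree A) + (1 - x) ^ degree A \<in> I"
    using pair_ideal_add by metis
  then show False using one_not_mem_ideal by simp
qed

lemma power_eq_lower_degree_poly:
  assumes x: "x \<noteq> 0" and B: "\<forall>i. coeff B i \<in> I" "poly B (inverse x) = 1" and n: "degree B \<le> n"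
  obtains T where "\<forall>i. coeff T i \<in> I" "degree T < n" "poly T x = x ^ n"
proof -
  define m where "m = degree B"
  define c where "c = coeff B 0"
  have "c \<in> I" using B(1) c_def by simp
  then have c1: "1 - c \<noteq> 0" and u: "inverse (1 - c) \<in> V"
    using one_not_mem_ideal inverse_one_minus_mem by auto
  have "m \<noteq> 0"
  proof
    assume "m = 0"
    then have "poly B (inverse x) = c" by (simp add: m_def c_def poly_altdef)
    then show False using B(2) \<open>c \<in> I\<close> one_not_mem_ideal by simp
  qed
  \<comment> \<open>Reflecting B(1/x) = 1 writes x^m as an I-combination of 1, ..., x^m whose top
    coefficient c lies in I; as 1 - c is a unit, x^m is an I-combination of lower powers.\<close>
  define T0 where "T0 = smult (inverse (1 - c)) (reflect_poly B - monom c m)"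
  have "poly (reflect_poly B) x = x ^ m"
    using poly_reflect_poly_nz[OF x, of B] B(2) by (simp add: m_def)
  then have T0_val: "poly T0 x = x ^ m"
    using c1 by (simp add: T0_def poly_monom field_simps)
  have T0_coeff: "coeff T0 i = (if i = m then 0 else inverse (1 - c) * coeff (reflect_poly B) i)" for i
    by (simp add: T0_def coeff_reflect_poly m_def c_def)
  have T0_I: "coeff T0 i \<in> I" for i
    using B(1) pair_ideal_zero pair_ideal_mult[OF u] by (auto simp: T0_coeff coeff_reflect_poly)
  have "degree T0 \<le> m"
    unfolding T0_def m_def
    by (intro order.trans[OF degree_smult_le] degree_diff_le degree_reflect_poly_le)
      (simp add: degree_monom_le)
  then have "degree T0 < m" using \<open>m \<noteq> 0\<close> by (intro degree_less_if_top_coeff_zero) (simp_all add: T0_coeff)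
  define T where "T = monom 1 (n - m) * T0"
  have "\<forall>i. coeff T i \<in> I" using T0_I pair_ideal_zero by (simp add: T_def coeff_monom_mult)
  moreover have "degree T < n"
    using degree_mult_le[of "monom 1 (n - m)" T0] \<open>degree T0 < m\<close> n
    by (simp add: T_def degree_monom_eq m_def)
  moreover have "poly T x = x ^ n"
    using T0_val n by (simp add: T_def poly_monom m_def flip: power_add)
  ultimately show ?thesis using that by blast
qed

lemma relation_degree_reduction:
  assumes x: "x \<noteq> 0" and A: "\<forall>i. coeff A i \<in> I" "poly A x = 1"
    and B: "\<forall>i. coeff B i \<in> I" "poly B (inverse x) = 1" and deg: "degree B \<le> degree A"
  obtains A' where "\<forall>i. coeff A' i \<in> I" "poly A' x = 1" "degree A' < degree A"
proof -
  define n where "n = degree A"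
  obtain T where T: "\<forall>i. coeff T i \<in> I" "degree T < n" "poly T x = x ^ n"
    using power_eq_lower_degree_poly[OF x B] deg n_def by metis
  have "lead_coeff A \<in> V" using A(1) ideal_subset by simp
  define A' where "A' = (A - monom (lead_coeff A) n) + smult (lead_coeff A) T"
  have "poly A' x = 1" using A(2) T(3) by (simp add: A'_def poly_monom)
  moreover have "\<forall>i. coeff A' i \<in> I"
    using A(1) T(1) pair_ideal_zero pair_ideal_add pair_ideal_mult[OF \<open>lead_coeff A \<in> V\<close>]
    by (simp add: A'_def n_def)
  moreover have "degree A' < n"
  proof -
    have "0 < n" using T(2) by simp
    then have "degree (A - monom (lead_coeff A) n) < n"
      by (intro degree_less_if_top_coeff_zero degree_diff_le) (simp_all add: n_def degree_monom_le)
    moreover have "degree (smult (lead_coeff A) T) < n"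
      using T(2) degree_smult_le le_less_trans by blast
    ultimately show ?thesis unfolding A'_def by (rule degree_add_less)
  qed
  ultimately show ?thesis using that n_def by blast
qed

lemma mem_or_inverse_mem:
  assumes x: "x \<noteq> 0" shows "x \<in> V \<or> inverse x \<in> V"
proof (rule ccontr)
  assume not_mem: "\<not> (x \<in> V \<or> inverse x \<in> V)"
  define rel where "rel y A \<longleftrightarrow> (\<forall>i. coeff A i \<in> I) \<and> poly A y = 1" for y A
  have "\<exists>A. rel y A \<and> (\<forall>A'. rel y A' \<longrightarrow> degree A \<le> degree A')" if y: "y \<notin> V" for y
  proof -
    obtain A0 where "rel y A0" using ideal_relation_if_not_mem[OF y] unfolding rel_def by blast
    then show ?thesis by (rule ex_has_least_nat)
  qed
  then obtain A B where A: "\<forall>i. coeff A i \<in> I" "poly A x = 1"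
    and A_min: "\<And>A'. rel x A' \<Longrightarrow> degree A \<le> degree A'"
    and B: "\<forall>i. coeff B i \<in> I" "poly B (inverse x) = 1"
    and B_min: "\<And>B'. rel (inverse x) B' \<Longrightarrow> degree B \<le> degree B'"
    using not_mem unfolding rel_def by meson
  show False
  proof (cases "degree B \<le> degree A")
    case True
    obtain A' where "\<forall>i. coeff A' i \<in> I" "poly A' x = 1" "degree A' < degree A"
      using relation_degree_reduction[OF x A B True] .
    then show False using A_min[of A'] unfolding rel_def by simp
  next
    case False
    have "inverse x \<noteq> 0" "poly A (inverse (inverse x)) = 1" "degree A \<le> degree B"
      using x A(2) False by simp_all
    then obtain B' where "\<forall>i. coeff B' i \<in> I" "poly B' (inverse x) = 1" "degree B' < degree B"
      using relation_degree_reduction[of "inverse x" B A] B A(1) by blast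
    then show False using B_min[of B'] unfolding rel_def by simp
  qed
qed

end

lemma exists_maximal_avoiding_subring:
  fixes R :: "'a::field set"
  assumes R: "subring R" "a \<in> R" "b \<in> R" "1 \<notin> pair_ideal R a b"
  obtains V where "R \<subseteq> V" "maximal_avoiding_subring V a b"
proof -
  define \<A> where "\<A> = {W. subring W \<and> R \<subseteq> W \<and> 1 \<notin> pair_ideal W a b}"
  have "\<Union>C \<in> \<A>" if C: "C \<noteq> {}" "subset.chain \<A> C" for C
  proof -
    have mem: "\<And>W. W \<in> C \<Longrightarrow> subring W \<and> R \<subseteq> W \<and> 1 \<notin> pair_ideal W a b"
      and chain: "\<And>W W'. W \<in> C \<Longrightarrow> W' \<in> C \<Longrightarrow> W \<subseteq> W' \<or> W' \<subseteq> W"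
      using C(2) unfolding subset_chain_def \<A>_def by blast+
    have "subring (\<Union>C)" using subring_Union_chain[OF C(1)] mem chain by blast
    moreover have "R \<subseteq> \<Union>C" using C(1) mem by blast
    moreover have "1 \<notin> pair_ideal (\<Union>C) a b"
    proof
      assume "1 \<in> pair_ideal (\<Union>C) a b"
      then obtain x y where xy: "x \<in> \<Union>C" "y \<in> \<Union>C" and one: "1 = x * a + y * b"
        unfolding pair_ideal_iff by blast
      obtain W where "W \<in> C" "x \<in> W" "y \<in> W" using chain_Union_common_member[OF chain xy] .
      then have "1 \<in> pair_ideal W a b" unfolding pair_ideal_iff using one by blast
      then show False using mem \<open>W \<in> C\<close> by blast
    qed
    ultimately show ?thesis unfolding \<A>_def by blast
  qed
  moreover have "R \<in> \<A>" using R unfolding \<A>_def by blast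
  ultimately obtain V where V: "V \<in> \<A>" and max: "\<And>W. W \<in> \<A> \<Longrightarrow> V \<subseteq> W \<Longrightarrow> W = V"
    using subset_Zorn_nonempty[of \<A>] by blast
  have "maximal_avoiding_subring V a b"
  proof unfold_locales
    show "a \<in> V" "b \<in> V" using V R(2,3) unfolding \<A>_def by blast+
    show "1 \<notin> pair_ideal V a b" using V unfolding \<A>_def by blast
    show "W = V" if "subring W" "V \<subseteq> W" "1 \<notin> pair_ideal W a b" for W
      using max[of W] that V unfolding \<A>_def by blast
  qed (use V subring.one_mem subring.add_mem subring.mult_mem subring.uminus_mem
      in \<open>auto simp: \<A>_def\<close>)
  then show ?thesis using that V unfolding \<A>_def by blast
qed

locale valuation_ring = subring V for V :: "'a::field set" +
  assumes mem_or_inverse_mem: "x \<noteq> 0 \<Longrightarrow> x \<in> V \<or> inverse x \<in> V"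
begin

lemma inverse_one_minus_mem_if_proper:
  assumes "1 \<notin> pair_ideal V a b" "x \<in> pair_ideal V a b"
  shows "inverse (1 - x) \<in> V"
proof (cases "x = 0")
  case True
  then show ?thesis using one_mem by simp
next
  case False
  have "x \<noteq> 1" using assms by blast
  then have "x / (1 - x) \<noteq> 0" using False by simp
  then have "x / (1 - x) \<in> V \<or> inverse (x / (1 - x)) \<in> V" by (rule mem_or_inverse_mem)
  then show ?thesis
  proof
    assume "x / (1 - x) \<in> V"
    moreover have "inverse (1 - x) = 1 + x / (1 - x)" using \<open>x \<noteq> 1\<close> by (simp add: field_simps)
    ultimately show ?thesis using add_mem[OF one_mem] by simp
  next
    assume "inverse (x / (1 - x)) \<in> V"
    moreover have "inverse x = 1 + inverse (x / (1 - x))" using False by (simp add: field_simps)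
    ultimately have "inverse x \<in> V" using add_mem[OF one_mem] by simp
    then have "inverse x * x \<in> pair_ideal V a b" using pair_ideal_mult[OF _ assms(2)] by blast
    then show ?thesis using assms(1) False by simp
  qed
qed

end

sublocale maximal_avoiding_subring \<subseteq> valuation_ring
  by unfold_locales (rule mem_or_inverse_mem)

theorem valuation_ring_avoiding_pair_ideal:
  fixes R :: "'a::field set"
  assumes "subring R" "a \<in> R" "b \<in> R" "1 \<notin> pair_ideal R a b"
  obtains V where "R \<subseteq> V" "valuation_ring V" "1 \<notin> pair_ideal V a b"
proof -
  obtain V where V: "R \<subseteq> V" "maximal_avoiding_subring V a b"
    using exists_maximal_avoiding_subring[OF assms] .
  interpret maximal_avoiding_subring V a b by (fact V(2))
  show ?thesis using that V(1) valuation_ring_axioms one_not_mem_ideal by blast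
qed

section \<open>The real valuation attached to a non-unit\<close>

locale valuation_ring_with_nonunit = valuation_ring V for V :: "'a::field set" +
  fixes \<pi> :: 'a
  assumes pi_mem: "\<pi> \<in> V" and inverse_pi_not_mem: "inverse \<pi> \<notin> V"
begin

lemma pi_nonzero: "\<pi> \<noteq> 0"
  using inverse_pi_not_mem zero_mem by auto

lemma pi_powi_add: "\<pi> powi (a + b) = \<pi> powi a * \<pi> powi b"
  using pi_nonzero by (simp add: power_int_add)

lemma pi_powi_power: "(\<pi> powi a) ^ n = \<pi> powi (a * int n)"
  by (simp add: power_int_mult)

(* k/e is a lower bound for the order of x at pi whenever pi^k divides x^e in V. *)
definition valuation_bounds :: "'a \<Rightarrow> real set" where
  "valuation_bounds x = {of_int k / of_nat e | k e. 0 < e \<and> x ^ e * \<pi> powi (- k) \<in> V}"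

definition valuation :: "'a \<Rightarrow> real" where
  "valuation x = Sup (valuation_bounds x)"

(* The elements of finite order at pi. *)
definition comparable :: "'a \<Rightarrow> bool" where
  "comparable x \<longleftrightarrow> x \<noteq> 0 \<and> (\<exists>k. \<pi> ^ k * x \<in> V) \<and> (\<exists>k. \<pi> ^ k * inverse x \<in> V)"

lemma valuation_boundsI:
  "0 < e \<Longrightarrow> x ^ e * \<pi> powi (- k) \<in> V \<Longrightarrow> of_int k / of_nat e \<in> valuation_bounds x"
  unfolding valuation_bounds_def by blast

lemma valuation_bounds_add:
  assumes "r \<in> valuation_bounds x" "s \<in> valuation_bounds y"
  shows "r + s \<in> valuation_bounds (x * y)"
proof -
  obtain k e where ke: "0 < e" "r = of_int k / of_nat e" "x ^ e * \<pi> powi (- k) \<in> V"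
    using assms(1) unfolding valuation_bounds_def by blast
  obtain l d where ld: "0 < d" "s = of_int l / of_nat d" "y ^ d * \<pi> powi (- l) \<in> V"
    using assms(2) unfolding valuation_bounds_def by blast
  have "(x ^ e * \<pi> powi (- k)) ^ d * (y ^ d * \<pi> powi (- l)) ^ e =
        (x * y) ^ (e * d) * \<pi> powi (- (k * int d + l * int e))"
    by (simp add: power_mult_distrib pi_powi_power flip: power_mult)
      (simp add: pi_powi_add[symmetric] mult.commute mult.left_commute)
  moreover have "(x ^ e * \<pi> powi (- k)) ^ d * (y ^ d * \<pi> powi (- l)) ^ e \<in> V"
    using mult_mem[OF power_mem[OF ke(3)] power_mem[OF ld(3)]] .
  ultimately have "of_int (k * int d + l * int e) / of_nat (e * d) \<in> valuation_bounds (x * y)"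
    using ke(1) ld(1) by (intro valuation_boundsI) simp_all
  moreover have "r + s = of_int (k * int d + l * int e) / of_nat (e * d)"
    using ke(1,2) ld(1,2) by (simp add: field_simps)
  ultimately show ?thesis by simp
qed

lemma valuation_bounds_dichotomy:
  assumes "x \<noteq> 0" "0 < e"
  shows "of_int k / of_nat e \<in> valuation_bounds x \<or> of_int (- k) / of_nat e \<in> valuation_bounds (inverse x)"
proof -
  define z where "z = x ^ e * \<pi> powi (- k)"
  have "z \<noteq> 0" using assms(1) pi_nonzero by (simp add: z_def)
  have inv: "inverse z = inverse x ^ e * \<pi> powi (- (- k))"
    by (simp add: z_def power_int_minus power_inverse)
  from mem_or_inverse_mem[OF \<open>z \<noteq> 0\<close>] show ?thesis
  proof
    assume "z \<in> V"
    then show ?thesis unfolding z_def using valuation_boundsI[OF assms(2)] by blast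
  next
    assume "inverse z \<in> V"
    then show ?thesis unfolding inv using valuation_boundsI[OF assms(2)] by blast
  qed
qed

lemma valuation_bounds_nonempty: "\<pi> ^ k * x \<in> V \<Longrightarrow> - real k \<in> valuation_bounds x"
  using valuation_boundsI[of 1 x "- int k"] by (simp add: mult.commute)

lemma valuation_bounds_le:
  assumes "x \<noteq> 0" "\<pi> ^ j * inverse x \<in> V" "r \<in> valuation_bounds x"
  shows "r \<le> real j"
proof (rule ccontr)
  assume "\<not> r \<le> real j"
  obtain k e where ke: "0 < e" "r = of_int k / of_nat e" "x ^ e * \<pi> powi (- k) \<in> V"
    using assms(3) unfolding valuation_bounds_def by blast
  with \<open>\<not> r \<le> real j\<close> have "real_of_int (int (j * e)) < real_of_int k"
    using pos_less_divide_eq[of "real e" "real j" "real_of_int k"] by simp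
  then have "int (j * e) < k" by (simp only: of_int_less_iff)
  define n where "n = nat (k - int (j * e) - 1)"
  have "(\<pi> ^ j * inverse x) ^ e * (x ^ e * \<pi> powi (- k)) * \<pi> ^ n =
        \<pi> ^ (j * e) * \<pi> powi (- k) * \<pi> ^ n"
    using assms(1) by (simp add: field_simps flip: power_mult)
  also have "\<dots> = \<pi> powi (int (j * e) + (- k) + int n)"
    by (simp only: pi_powi_add power_int_of_nat)
  also have "\<dots> = \<pi> powi (- 1)"
    using \<open>int (j * e) < k\<close> by (simp add: n_def)
  finally have "inverse \<pi> = (\<pi> ^ j * inverse x) ^ e * (x ^ e * \<pi> powi (- k)) * \<pi> ^ n"
    by (simp add: power_int_minus)
  then have "inverse \<pi> \<in> V"
    using ke(3) assms(2) by (simp add: mult_mem power_mem pi_mem)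
  then show False using inverse_pi_not_mem by simp
qed

lemma comparable_inverse: "comparable x \<Longrightarrow> comparable (inverse x)"
  unfolding comparable_def by simp

lemma comparable_mult:
  assumes "comparable x" "comparable y" shows "comparable (x * y)"
proof -
  obtain i j k l where "\<pi> ^ i * x \<in> V" "\<pi> ^ j * y \<in> V"
    and "\<pi> ^ k * inverse x \<in> V" "\<pi> ^ l * inverse y \<in> V"
    using assms unfolding comparable_def by blast
  moreover have "\<pi> ^ (i + j) * (x * y) = (\<pi> ^ i * x) * (\<pi> ^ j * y)"
    and "\<pi> ^ (k + l) * inverse (x * y) = (\<pi> ^ k * inverse x) * (\<pi> ^ l * inverse y)"
    by (simp_all add: power_add mult_ac)
  ultimately show ?thesis using assms mult_mem unfolding comparable_def by (metis mult_eq_0_iff)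
qed

lemma valuation_upper: "comparable x \<Longrightarrow> r \<in> valuation_bounds x \<Longrightarrow> r \<le> valuation x"
  unfolding comparable_def valuation_def
  by (metis bdd_aboveI cSup_upper valuation_bounds_le)

lemma valuation_least:
  "comparable x \<Longrightarrow> (\<And>r. r \<in> valuation_bounds x \<Longrightarrow> r \<le> c) \<Longrightarrow> valuation x \<le> c"
  unfolding comparable_def valuation_def
  by (metis cSup_least empty_iff valuation_bounds_nonempty)

lemma valuation_superadditive:
  assumes "comparable x" "comparable y"
  shows "valuation x + valuation y \<le> valuation (x * y)"
proof -
  have "r + s \<le> valuation (x * y)" if "r \<in> valuation_bounds x" "s \<in> valuation_bounds y" for r s
    using valuation_upper[OF comparable_mult[OF assms] valuation_bounds_add[OF that]] .
  then have "r + valuation y \<le> valuation (x * y)" if "r \<in> valuation_bounds x" for r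
    using valuation_least[OF assms(2), of "valuation (x * y) - r"] that by fastforce
  then show ?thesis
    using valuation_least[OF assms(1), of "valuation (x * y) - valuation y"] by fastforce
qed

lemma valuation_inverse_nonneg:
  assumes x: "comparable x" shows "0 \<le> valuation x + valuation (inverse x)"
proof (rule ccontr)
  assume "\<not> 0 \<le> valuation x + valuation (inverse x)"
  then have "valuation x < - valuation (inverse x)" by simp
  then obtain q where q: "q \<in> \<rat>" "valuation x < q" "q < - valuation (inverse x)"
    using Rats_dense_in_real by blast
  obtain k c where kc: "0 < c" "q = of_int k / of_int c" using Rats_cases'[OF q(1)] by metis
  define e where "e = nat c"
  have e: "0 < e" "q = of_int k / of_nat e" using kc by (simp_all add: e_def)
  have "x \<noteq> 0" using x unfolding comparable_def by blast
  from valuation_bounds_dichotomy[OF this e(1), of k] show False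
  proof
    assume "of_int k / of_nat e \<in> valuation_bounds x"
    then have "q \<le> valuation x" using valuation_upper[OF x] e(2) by simp
    then show False using q(2) by simp
  next
    assume "of_int (- k) / of_nat e \<in> valuation_bounds (inverse x)"
    then have "- q \<le> valuation (inverse x)" using valuation_upper[OF comparable_inverse[OF x]] e(2) by simp
    then show False using q(3) by simp
  qed
qed

lemma valuation_mult:
  assumes "comparable x" "comparable y"
  shows "valuation (x * y) = valuation x + valuation y"
proof -
  have "x * y \<noteq> 0" "y \<noteq> 0" using assms comparable_mult unfolding comparable_def by blast+
  have "valuation (x * y) + valuation (inverse y) \<le> valuation (x * y * inverse y)"
    using valuation_superadditive[OF comparable_mult[OF assms] comparable_inverse[OF assms(2)]] .
  also have "x * y * inverse y = x" using \<open>y \<noteq> 0\<close> by simp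
  finally show ?thesis
    using valuation_inverse_nonneg[OF assms(2)] valuation_superadditive[OF assms] by linarith
qed

lemma valuation_nonneg: "x \<in> V \<Longrightarrow> comparable x \<Longrightarrow> 0 \<le> valuation x"
  using valuation_upper valuation_boundsI[of 1 x 0] by fastforce

lemma valuation_pos:
  assumes "comparable x" "0 < e" "x ^ e * inverse \<pi> \<in> V"
  shows "0 < valuation x"
proof -
  have "of_int 1 / of_nat e \<in> valuation_bounds x"
    using valuation_boundsI[OF assms(2), of x 1] assms(3) by (simp add: power_int_minus)
  then show ?thesis using valuation_upper[OF assms(1)] assms(2)
    by (metis divide_pos_pos of_int_1 of_nat_0_less_iff order_less_le_trans zero_less_one)
qed

lemma valuation_add:
  assumes "comparable x" "comparable y" "comparable (x + y)"
  shows "min (valuation x) (valuation y) \<le> valuation (x + y)"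
proof -
  have *: "valuation u \<le> valuation (u + w) \<and> valuation u \<le> valuation w"
    if u: "comparable u" and w: "comparable w" "comparable (u + w)" and "w / u \<in> V" for u w
  proof -
    have "u \<noteq> 0" using u unfolding comparable_def by blast
    have t: "comparable (w / u)" "comparable (1 + w / u)"
      using comparable_mult[OF w(1) comparable_inverse[OF u]]
        comparable_mult[OF w(2) comparable_inverse[OF u]] \<open>u \<noteq> 0\<close>
      by (simp_all add: divide_inverse distrib_right)
    have "u + w = u * (1 + w / u)" "w = u * (w / u)" using \<open>u \<noteq> 0\<close> by (simp_all add: field_simps)
    moreover have "0 \<le> valuation (w / u)" "0 \<le> valuation (1 + w / u)"
      using valuation_nonneg t \<open>w / u \<in> V\<close> add_mem[OF one_mem] by auto
    ultimately show ?thesis using valuation_mult[OF u] t by (metis le_add_same_cancel1)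
  qed
  have "x \<noteq> 0" "y \<noteq> 0" using assms unfolding comparable_def by blast+
  then have "y / x \<in> V \<or> x / y \<in> V" using mem_or_inverse_mem[of "y / x"] by auto
  then show ?thesis
    using *[of x y] *[of y x] assms by (auto simp: add.commute min_le_iff_disj)
qed

definition absv :: "'a \<Rightarrow> real" where
  "absv x = (if x = 0 then 0 else 2 powr (- valuation x))"

lemma absv_nonneg: "0 \<le> absv x"
  by (simp add: absv_def)

lemma absv_eq_0_iff: "absv x = 0 \<longleftrightarrow> x = 0"
  by (simp add: absv_def)

lemma absv_mult:
  assumes "x = 0 \<or> comparable x" "y = 0 \<or> comparable y"
  shows "absv (x * y) = absv x * absv y"
proof (cases "x = 0 \<or> y = 0")
  case False
  then have "comparable x" "comparable y" using assms by auto
  then show ?thesis using False by (simp add: absv_def valuation_mult powr_add[symmetric])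
qed (auto simp: absv_def)

lemma absv_ultrametric:
  assumes "x = 0 \<or> comparable x" "y = 0 \<or> comparable y" "x + y = 0 \<or> comparable (x + y)"
  shows "absv (x + y) \<le> max (absv x) (absv y)"
proof (cases "x = 0 \<or> y = 0 \<or> x + y = 0")
  case True
  then show ?thesis using absv_nonneg[of x] absv_nonneg[of y] by (auto simp: absv_def le_max_iff_disj)
next
  case False
  then have "comparable x" "comparable y" "comparable (x + y)" using assms by auto
  then have "- valuation (x + y) \<le> max (- valuation x) (- valuation y)"
    using valuation_add by fastforce
  then show ?thesis using False by (auto simp: absv_def le_max_iff_disj)
qed

lemma subring_pi_bounded: "subring {x. \<exists>k. \<pi> ^ k * x \<in> V}"
proof
  show "1 \<in> {x. \<exists>k. \<pi> ^ k * x \<in> V}" using one_mem by (auto intro: exI[of _ 0])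
next
  fix x y assume "x \<in> {x. \<exists>k. \<pi> ^ k * x \<in> V}" "y \<in> {x. \<exists>k. \<pi> ^ k * x \<in> V}"
  then obtain k l where x: "\<pi> ^ k * x \<in> V" and y: "\<pi> ^ l * y \<in> V" by blast
  have "\<pi> ^ (k + l) * (x + y) = \<pi> ^ l * (\<pi> ^ k * x) + \<pi> ^ k * (\<pi> ^ l * y)"
    by (simp add: power_add algebra_simps)
  also have "\<dots> \<in> V" using x y by (meson add_mem mult_mem power_mem pi_mem)
  finally show "x + y \<in> {x. \<exists>k. \<pi> ^ k * x \<in> V}" by blast
  have "\<pi> ^ (k + l) * (x * y) = (\<pi> ^ k * x) * (\<pi> ^ l * y)"
    by (simp add: power_add algebra_simps)
  also have "\<dots> \<in> V" using x y by (rule mult_mem)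
  finally show "x * y \<in> {x. \<exists>k. \<pi> ^ k * x \<in> V}" by blast
next
  fix x assume "x \<in> {x. \<exists>k. \<pi> ^ k * x \<in> V}"
  then show "- x \<in> {x. \<exists>k. \<pi> ^ k * x \<in> V}" using uminus_mem by fastforce
qed

lemma absv_less_one: "comparable x \<Longrightarrow> 0 < valuation x \<Longrightarrow> absv x < 1"
  by (simp add: absv_def comparable_def powr_less_one)

end

section \<open>A non-archimedean place above a prime divisor of the leading coefficient\<close>

lemma min_degree_root_poly_pseudo_dvd:
  fixes \<beta> :: "'a::{idom,ring_char_0}"
  assumes m: "m \<noteq> 0" "poly (map_poly of_int m) \<beta> = 0"
    and m_min: "\<And>P. P \<noteq> 0 \<Longrightarrow> poly (map_poly of_int P) \<beta> = 0 \<Longrightarrow> degree m \<le> degree P"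
    and Q: "poly (map_poly of_int Q) \<beta> = 0"
  obtains a q where "a \<noteq> 0" "smult a Q = m * q"
proof -
  obtain a q where aq: "a \<noteq> 0" "smult a Q = m * q + pseudo_mod Q m"
    using pseudo_mod(1)[OF m(1)] by blast
  have "poly (map_poly (of_int :: int \<Rightarrow> 'a) (smult a Q)) \<beta> =
        poly (map_poly of_int (m * q + pseudo_mod Q m)) \<beta>"
    using aq(2) by simp
  then have "poly (map_poly (of_int :: int \<Rightarrow> 'a) (pseudo_mod Q m)) \<beta> = 0"
    using Q m(2) by (simp add: map_poly_of_int_smult map_poly_of_int_add map_poly_of_int_mult)
  moreover have "pseudo_mod Q m = 0 \<or> degree (pseudo_mod Q m) < degree m"
    using pseudo_mod(2)[OF m(1)] by simp
  ultimately have "pseudo_mod Q m = 0" using m_min by fastforce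
  then show ?thesis using that aq by simp
qed

lemma irreducible_dvd_of_common_root:
  fixes \<beta> :: "'a::{idom,ring_char_0}"
  assumes irr: "irreducible f" and root: "poly (map_poly of_int f) \<beta> = 0"
    and Q: "poly (map_poly of_int Q) \<beta> = 0"
  shows "f dvd Q"
proof -
  have "f \<noteq> 0" using irr by auto
  have no_const_root: "degree P \<noteq> 0" if P: "P \<noteq> 0" "poly (map_poly of_int P) \<beta> = 0" for P
  proof
    assume "degree P = 0"
    then obtain c where "P = [:c:]" by (rule degree_eq_zeroE)
    then show False using P by (simp add: map_poly_pCons)
  qed
  have "\<exists>m. (m \<noteq> 0 \<and> poly (map_poly of_int m) \<beta> = 0) \<and>
            (\<forall>P. P \<noteq> 0 \<and> poly (map_poly of_int P) \<beta> = 0 \<longrightarrow> degree m \<le> degree P)"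
    by (rule ex_has_least_nat) (use \<open>f \<noteq> 0\<close> root in blast)
  then obtain m where m: "m \<noteq> 0" "poly (map_poly of_int m) \<beta> = 0"
    and m_min: "\<And>P. P \<noteq> 0 \<Longrightarrow> poly (map_poly of_int P) \<beta> = 0 \<Longrightarrow> degree m \<le> degree P"
    by blast
  have prime: "prime_elem f" using irr by (rule irreducible_imp_prime_poly)
  have "f dvd m"
  proof -
    obtain a q where aq: "a \<noteq> 0" "smult a f = m * q"
      using min_degree_root_poly_pseudo_dvd[OF m m_min root] .
    have "f dvd m * q" using dvd_smult[OF dvd_refl, of f a] aq(2) by simp
    moreover have "\<not> f dvd q"
    proof
      assume "f dvd q"
      then obtain h where "q = f * h" by (elim dvdE)
      then have "[:a:] * f = (m * h) * f" using aq(2) by (simp add: algebra_simps)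
      then have "[:a:] = m * h" by (simp only: mult_right_cancel[OF \<open>f \<noteq> 0\<close>])
      moreover from this have "h \<noteq> 0" using aq(1) by auto
      ultimately have "degree m = 0" using degree_mult_eq[OF m(1), of h] by (metis add_is_0 degree_pCons_0)
      then show False using no_const_root[OF m] by simp
    qed
    ultimately show ?thesis using prime by (simp add: prime_elem_dvd_mult_iff)
  qed
  obtain a q where aq: "a \<noteq> 0" "smult a Q = m * q"
    using min_degree_root_poly_pseudo_dvd[OF m m_min Q] .
  then have "f dvd [:a:] * Q" using \<open>f dvd m\<close> by simp
  moreover have "\<not> f dvd [:a:]"
    using no_const_root[OF \<open>f \<noteq> 0\<close> root] aq(1) dvd_imp_degree_le[of f "[:a:]"] by auto
  ultimately show ?thesis using prime_elem_dvd_multD[OF prime] by blast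
qed

(* A relation 1 = p A(1/beta) + B(1/beta)/beta would make its reversal vanish at beta, so
   the leading coefficient of f would divide p A(0) - 1. *)
lemma one_not_mem_pair_ideal_int_poly_adjoin_inverse:
  fixes \<beta> :: "'a::{field,ring_char_0}"
  assumes irr: "irreducible f" and root: "poly (map_poly of_int f) \<beta> = 0" and "\<beta> \<noteq> 0"
    and p: "prime p" "p dvd lead_coeff f"
  shows "1 \<notin> pair_ideal (poly_adjoin \<int> (inverse \<beta>)) (of_int p) (inverse \<beta>)"
proof
  assume "1 \<in> pair_ideal (poly_adjoin \<int> (inverse \<beta>)) (of_int p) (inverse \<beta>)"
  then obtain u w where "u \<in> poly_adjoin \<int> (inverse \<beta>)" "w \<in> poly_adjoin \<int> (inverse \<beta>)"
    and uw: "1 = u * of_int p + w * inverse \<beta>"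
    unfolding pair_ideal_iff by blast
  then obtain A B where A: "\<forall>i. coeff A i \<in> \<int>" "u = poly A (inverse \<beta>)"
    and B: "\<forall>i. coeff B i \<in> \<int>" "w = poly B (inverse \<beta>)"
    unfolding poly_adjoin_def by blast
  obtain P where P: "A = map_poly of_int P"
  proof (rule intpolyE)
    show "coeff A i \<in> \<int>" for i using A(1) by blast
  qed
  obtain Q where Q: "B = map_poly of_int Q"
  proof (rule intpolyE)
    show "coeff B i \<in> \<int>" for i using B(1) by blast
  qed
  define H where "H = smult p P + [:0, 1:] * Q - 1"
  have "poly (map_poly (of_int :: int \<Rightarrow> 'a) H) (inverse \<beta>) = 0"
    using uw by (simp add: A(2) B(2) H_def P Q map_poly_of_int_add map_poly_of_int_diff
        map_poly_of_int_smult map_poly_of_int_mult map_poly_pCons algebra_simps)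
  then have "poly (map_poly of_int (reflect_poly H)) \<beta> = 0"
    using poly_reflect_poly_nz[OF \<open>\<beta> \<noteq> 0\<close>, of "map_poly of_int H"]
    by (simp add: map_poly_of_int_reflect_poly)
  then have "f dvd reflect_poly H" by (rule irreducible_dvd_of_common_root[OF irr root])
  then obtain g where "reflect_poly H = f * g" by (elim dvdE)
  then have "lead_coeff f dvd lead_coeff (reflect_poly H)" by (simp add: lead_coeff_mult)
  moreover have H0: "coeff H 0 = p * coeff P 0 - 1" by (simp add: H_def)
  moreover have "coeff H 0 \<noteq> 0"
  proof
    assume "coeff H 0 = 0"
    then have "p * coeff P 0 = 1" by (simp add: H0)
    then have "p dvd 1" by (metis dvd_triv_left)
    then show False using p(1) by (simp add: not_prime_unit)
  qed
  then have "lead_coeff (reflect_poly H) = coeff H 0" by (simp add: coeff_reflect_poly)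
  ultimately have "p dvd p * coeff P 0 - 1" using dvd_trans[OF p(2)] by simp
  then have "p dvd 1" using dvd_diff[OF dvd_triv_left[of p "coeff P 0"]] by fastforce
  then show False using p(1) by (simp add: not_prime_unit)
qed

lemma exists_last_coeff_not_dvd:
  assumes "content f = 1" "prime p"
  obtains i where "\<not> p dvd coeff f i" "\<And>j. i < j \<Longrightarrow> p dvd coeff f j"
proof -
  define S where "S = {i. \<not> p dvd coeff f i}"
  have "S \<noteq> {}"
  proof
    assume "S = {}"
    then have "[:p:] dvd f" by (simp add: S_def const_poly_dvd_iff)
    then have "p dvd content f" by (simp add: const_poly_dvd_iff_dvd_content)
    then show False using assms by (simp add: not_prime_unit)
  qed
  moreover have "S \<subseteq> {..degree f}"
    unfolding S_def using coeff_eq_0 by (metis (mono_tags) atMost_iff dvd_0_right mem_Collect_eq not_le subsetI)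
  then have "finite S" by (rule finite_subset) simp
  ultimately have max: "Max S \<in> S" "\<And>j. j \<in> S \<Longrightarrow> j \<le> Max S" by simp_all
  show ?thesis
  proof (rule that[of "Max S"])
    show "\<not> p dvd coeff f (Max S)" using max(1) by (simp add: S_def)
    show "p dvd coeff f j" if "Max S < j" for j
      using max(2)[of j] that by (force simp: S_def)
  qed
qed

locale place_above_prime = valuation_ring V for V :: "complex set" +
  fixes f :: "int poly" and \<beta> :: complex and p :: int
  assumes root: "poly (map_poly of_int f) \<beta> = 0" and coeff_0: "coeff f 0 \<noteq> 0"
    and content: "content f = 1" and prime: "prime p" and p_dvd: "p dvd lead_coeff f"
    and inverse_root_mem: "inverse \<beta> \<in> V"
    and one_not_mem_ideal: "1 \<notin> pair_ideal V (of_int p) (inverse \<beta>)"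
begin

abbreviation I :: "complex set" where "I \<equiv> pair_ideal V (of_int p) (inverse \<beta>)"

lemma root_nonzero: "\<beta> \<noteq> 0"
  using nonzero_root_if_coeff_0_nonzero[OF coeff_0 root] .

lemma inverse_of_int_not_mem: "inverse (of_int p) \<notin> V"
proof
  assume "inverse (of_int p) \<in> V"
  then have "inverse (of_int p) * of_int p + 0 * inverse \<beta> \<in> I"
    unfolding pair_ideal_iff using zero_mem by blast
  then show False using one_not_mem_ideal prime by (simp add: prime_gt_0_int)
qed

sublocale valuation_ring_with_nonunit V "of_int p"
  by unfold_locales (simp_all add: of_int_mem inverse_of_int_not_mem)

lemma inverse_of_int_mem: assumes "\<not> p dvd u" shows "inverse (of_int u :: complex) \<in> V"
proof -
  obtain s t where "bezout_coefficients p u = (s, t)" by (cases "bezout_coefficients p u")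
  then have "s * p + t * u = 1"
    using bezout_coefficients prime_imp_coprime[OF prime assms] by (metis coprime_iff_gcd_eq_1)
  then have eq: "1 - of_int s * of_int p = (of_int t * of_int u :: complex)"
    by (metis add_diff_cancel_left' mult.commute of_int_1 of_int_add of_int_mult)
  have "of_int s * of_int p \<in> I" using pair_ideal_mult[OF of_int_mem pair_ideal_left] .
  then have "inverse (of_int t * of_int u) \<in> V"
    using inverse_one_minus_mem_if_proper[OF one_not_mem_ideal] eq by metis
  moreover have "t \<noteq> 0"
  proof
    assume "t = 0"
    then have "p dvd 1" using \<open>s * p + t * u = 1\<close> by (metis add.right_neutral dvd_triv_right mult_zero_left)
    then show False using prime by (simp add: not_prime_unit)
  qed
  ultimately have "of_int t * inverse (of_int t * of_int u) \<in> V" using mult_mem of_int_mem by blast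
  then show ?thesis using \<open>t \<noteq> 0\<close> by (simp add: mult.assoc[symmetric])
qed

lemma p_power_times_inverse_of_int_mem:
  assumes "m \<noteq> 0" obtains k where "of_int p ^ k * inverse (of_int m :: complex) \<in> V"
proof -
  obtain y where y: "m = p ^ multiplicity p m * y" "\<not> p dvd y"
    using multiplicity_decompose'[OF assms] prime by (metis not_prime_unit)
  then have "(of_int m :: complex) = of_int p ^ multiplicity p m * of_int y"
    by (metis of_int_mult of_int_power)
  moreover have "y \<noteq> 0" "p \<noteq> 0" using y(2) prime by auto
  ultimately have "of_int p ^ multiplicity p m * inverse (of_int m :: complex) = inverse (of_int y)"
    by (simp add: field_simps)
  then show ?thesis using that inverse_of_int_mem[OF y(2)] by metis
qed

interpretation bounded: subring "{x. \<exists>k. of_int p ^ k * x \<in> V}"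
  by (rule subring_pi_bounded)

lemma of_rat_bounded: "\<exists>k. of_int p ^ k * of_rat c \<in> V"
proof -
  obtain n m where nm: "0 < m" "(of_rat c :: complex) = of_int n / of_int m"
    using Rats_cases'[OF Rats_of_rat[of c]] by metis
  have "m \<noteq> 0" using nm(1) by simp
  then obtain k where "of_int p ^ k * inverse (of_int m :: complex) \<in> V"
    by (rule p_power_times_inverse_of_int_mem)
  then have "of_int n * (of_int p ^ k * inverse (of_int m :: complex)) \<in> V" by (rule mult_mem[OF of_int_mem])
  then show ?thesis using nm(2) by (auto simp: divide_inverse mult_ac)
qed

lemma root_bounded: "\<exists>k. of_int p ^ k * \<beta> \<in> V"
proof -
  obtain a G where aG: "reflect_poly f = pCons a G" by (rule pCons_cases)
  have a: "a = lead_coeff f" using coeff_0_reflect_poly[of f] aG by simp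
  have "a \<noteq> 0" using coeff_0 a by auto
  have "poly (map_poly of_int (reflect_poly f)) (inverse \<beta>) = 0"
    using poly_reflect_poly_nz[of "inverse \<beta>" "map_poly of_int f"] root root_nonzero
    by (simp add: map_poly_of_int_reflect_poly)
  then have "of_int a = - (inverse \<beta> * poly (map_poly of_int G) (inverse \<beta>))"
    by (simp add: aG map_poly_pCons eq_neg_iff_add_eq_0)
  then have "of_int a * \<beta> = - poly (map_poly of_int G) (inverse \<beta>)"
    using root_nonzero by (simp add: field_simps)
  moreover have "poly (map_poly of_int G) (inverse \<beta>) \<in> V"
    using inverse_root_mem by (intro poly_mem) (auto simp: coeff_map_poly of_int_mem)
  ultimately have "of_int a * \<beta> \<in> V" using uminus_mem by simp
  moreover obtain k where "of_int p ^ k * inverse (of_int a :: complex) \<in> V"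
    using p_power_times_inverse_of_int_mem[OF \<open>a \<noteq> 0\<close>] by blast
  ultimately have "(of_int p ^ k * inverse (of_int a)) * (of_int a * \<beta>) \<in> V" by (rule mult_mem[rotated])
  then show ?thesis using \<open>a \<noteq> 0\<close> by (auto simp: field_simps)
qed

lemma rat_field_gen_bounded:
  assumes "x \<in> rat_field_gen \<beta>" shows "\<exists>k. of_int p ^ k * x \<in> V"
proof -
  have "map_poly (of_int :: int \<Rightarrow> rat) f \<noteq> 0" using coeff_0 by (auto simp: map_poly_eq_0_iff)
  moreover have "map_poly (of_rat :: rat \<Rightarrow> complex) (map_poly of_int f) = map_poly of_int f"
    by (rule poly_eqI) (simp add: coeff_map_poly)
  ultimately obtain H where "x = poly (map_poly of_rat H) \<beta>"
    using rat_field_gen_eq_poly_value assms root by metis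
  moreover have "poly (map_poly of_rat H) \<beta> \<in> {x. \<exists>k. of_int p ^ k * x \<in> V}"
    using of_rat_bounded root_bounded by (intro bounded.poly_mem) (auto simp: coeff_map_poly)
  ultimately show ?thesis by simp
qed

lemma comparable_if_mem_rat_field_gen: "x \<in> rat_field_gen \<beta> \<Longrightarrow> x \<noteq> 0 \<Longrightarrow> comparable x"
  unfolding comparable_def by (auto intro: rat_field_gen_bounded inverse_mem_rat_field_gen)

lemma coeff_mem_ideal_if_p_times_root_powers_mem:
  assumes pow: "\<And>e. of_int p * \<beta> ^ e \<in> V" and high: "\<And>j. i0 < j \<Longrightarrow> p dvd coeff f j"
  shows "of_int (coeff f i0) \<in> I"
proof (cases "i0 \<le> degree f")
  case False
  then show ?thesis using pair_ideal_zero by (simp add: coeff_eq_0)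
next
  case True
  \<comment> \<open>In f(beta) / beta^i0 = 0 the terms below i0 are multiples of gamma = 1/beta, and
    those above i0 are multiples of p beta^e = gamma * p beta^(e+1).\<close>
  define \<gamma> where "\<gamma> = inverse \<beta>"
  have cancel: "\<beta> ^ n * \<gamma> ^ n = 1" for n
    using root_nonzero by (simp add: \<gamma>_def power_mult_distrib[symmetric])
  define t where "t i = of_int (coeff f i) * \<beta> ^ i * \<gamma> ^ i0" for i
  have "t i \<in> I" if "i \<noteq> i0" for i
  proof (cases "i < i0")
    case True
    then have "\<gamma> ^ i0 = \<gamma> ^ i * (\<gamma> ^ (i0 - i - 1) * \<gamma>)"
      by (metis Suc_diff_Suc diff_Suc_1 le_add_diff_inverse less_imp_le_nat power_Suc2 power_add)
    then have "t i = (of_int (coeff f i) * \<gamma> ^ (i0 - i - 1)) * \<gamma>"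
      using cancel[of i] by (simp add: t_def mult_ac)
    then show ?thesis unfolding \<gamma>_def
      using pair_ideal_mult[OF mult_mem[OF of_int_mem power_mem[OF inverse_root_mem]] pair_ideal_right]
      by simp
  next
    case False
    with that have "i0 < i" by simp
    then obtain c where c: "coeff f i = p * c" using high dvdE by blast
    have "\<beta> ^ i = \<beta> ^ i0 * (\<beta> ^ Suc (i - i0) * \<gamma>)"
      using \<open>i0 < i\<close> cancel[of 1] by (simp add: mult_ac flip: power_add)
    then have "t i = (of_int c * (of_int p * \<beta> ^ Suc (i - i0))) * \<gamma>"
      using cancel[of i0] by (simp add: t_def c mult_ac)
    moreover have "(of_int c * (of_int p * \<beta> ^ Suc (i - i0))) * inverse \<beta> \<in> I"
      by (rule pair_ideal_mult[OF mult_mem[OF of_int_mem pow] pair_ideal_right])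
    ultimately show ?thesis by (simp only: \<gamma>_def)
  qed
  then have "(\<Sum>i\<in>{..degree f} - {i0}. t i) \<in> I" by (intro pair_ideal_sum) simp
  then have "- (\<Sum>i\<in>{..degree f} - {i0}. t i) \<in> I"
    using pair_ideal_mult[OF of_int_mem[of "- 1"]] by fastforce
  moreover have "0 = t i0 + (\<Sum>i\<in>{..degree f} - {i0}. t i)"
  proof -
    have "0 = poly (map_poly of_int f) \<beta> * \<gamma> ^ i0" using root by simp
    also have "\<dots> = (\<Sum>i\<le>degree f. t i)"
      by (simp add: poly_map_poly_of_int_eq_sum t_def sum_distrib_right)
    also have "\<dots> = t i0 + (\<Sum>i\<in>{..degree f} - {i0}. t i)"
      using True by (simp add: sum.remove)
    finally show ?thesis .
  qed
  moreover have "t i0 = of_int (coeff f i0)" using cancel[of i0] by (simp add: t_def mult.assoc)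
  ultimately show ?thesis by (metis add.commute add_eq_0_iff)
qed

(* The order of 1/beta at p is positive; this is where primitivity of f is used. *)
lemma inverse_root_power_over_p_mem:
  obtains e where "0 < e" "inverse \<beta> ^ e * inverse (of_int p) \<in> V"
proof -
  have "\<exists>e>0. inverse \<beta> ^ e * inverse (of_int p) \<in> V"
  proof (rule ccontr)
    assume none: "\<not> (\<exists>e>0. inverse \<beta> ^ e * inverse (of_int p) \<in> V)"
    have pow: "of_int p * \<beta> ^ e \<in> V" for e
    proof (cases "e = 0")
      case False
      have "inverse \<beta> ^ e * inverse (of_int p) \<noteq> 0" using root_nonzero prime by auto
      then have "inverse (inverse \<beta> ^ e * inverse (of_int p)) \<in> V"
        using mem_or_inverse_mem none False by blast
      then show ?thesis by (simp add: power_inverse mult.commute)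
    qed (simp add: of_int_mem)
    obtain i0 where i0: "\<not> p dvd coeff f i0" "\<And>j. i0 < j \<Longrightarrow> p dvd coeff f j"
      using exists_last_coeff_not_dvd[OF content prime] by blast
    have "of_int (coeff f i0) \<in> I" by (rule coeff_mem_ideal_if_p_times_root_powers_mem[OF pow i0(2)])
    then have "inverse (of_int (coeff f i0)) * of_int (coeff f i0) \<in> I"
      by (rule pair_ideal_mult[OF inverse_of_int_mem[OF i0(1)]])
    moreover have "coeff f i0 \<noteq> 0" using i0(1) by auto
    ultimately show False using one_not_mem_ideal by simp
  qed
  then show ?thesis using that by blast
qed

lemma zero_or_comparable: "x \<in> rat_field_gen \<beta> \<Longrightarrow> x = 0 \<or> comparable x"
  using comparable_if_mem_rat_field_gen by blast

lemma absv_ultrametric_on_rat_field_gen: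
  assumes "x \<in> rat_field_gen \<beta>" "y \<in> rat_field_gen \<beta>"
  shows "absv (x + y) \<le> max (absv x) (absv y)"
  by (rule absv_ultrametric[OF zero_or_comparable[OF assms(1)] zero_or_comparable[OF assms(2)]
        zero_or_comparable[OF rat_field_gen.add_mem[OF assms]]])

lemma absv_inverse_root_less_one: "absv (inverse \<beta>) < 1"
proof -
  have "comparable (inverse \<beta>)"
    using comparable_if_mem_rat_field_gen inverse_mem_rat_field_gen generator_mem_rat_field_gen
      root_nonzero by simp
  moreover obtain e where "0 < e" "inverse \<beta> ^ e * inverse (of_int p) \<in> V"
    by (rule inverse_root_power_over_p_mem)
  ultimately show ?thesis by (intro absv_less_one valuation_pos) (simp_all add: power_int_minus)
qed

lemma abs_value_on_absv: "abs_value_on (rat_field_gen \<beta>) absv"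
  unfolding abs_value_on_def
proof (intro conjI ballI)
  fix x y assume xy: "x \<in> rat_field_gen \<beta>" "y \<in> rat_field_gen \<beta>"
  show "absv (x * y) = absv x * absv y"
    by (rule absv_mult[OF zero_or_comparable[OF xy(1)] zero_or_comparable[OF xy(2)]])
  show "absv (x + y) \<le> absv x + absv y"
    using absv_ultrametric_on_rat_field_gen[OF xy] absv_nonneg[of x] absv_nonneg[of y] by linarith
next
  show "\<exists>x\<in>rat_field_gen \<beta>. x \<noteq> 0 \<and> absv x \<noteq> 1"
  proof (rule bexI)
    show "inverse \<beta> \<noteq> 0 \<and> absv (inverse \<beta>) \<noteq> 1"
      using absv_inverse_root_less_one root_nonzero by simp
  qed (rule inverse_mem_rat_field_gen[OF generator_mem_rat_field_gen])
qed (simp_all add: absv_nonneg absv_eq_0_iff)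

lemma not_archimedean_absv: "\<not> archimedean_on (rat_field_gen \<beta>) absv"
  unfolding archimedean_on_def using absv_ultrametric_on_rat_field_gen by simp

lemma unstable_at_absv: "unstable_at \<beta> absv"
proof -
  have "inverse \<beta> \<in> rat_field_gen \<beta>"
    using inverse_mem_rat_field_gen[OF generator_mem_rat_field_gen] .
  then have "absv (inverse \<beta> ^ n) = absv (inverse \<beta>) ^ n" for n
    using abs_value_power[OF subring_rat_field_gen abs_value_on_absv] by blast
  moreover have "(\<lambda>n. absv (inverse \<beta>) ^ n) \<longlonglongrightarrow> 0"
    using absv_inverse_root_less_one absv_nonneg by (intro LIMSEQ_power_zero) simp
  ultimately show ?thesis unfolding unstable_at_def by simp
qed

end

lemma archimedean_if_unstable_and_unit_lead_coeff:
  assumes lc: "lead_coeff f = 1 \<or> lead_coeff f = -1"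
    and a0: "coeff f 0 \<noteq> 0" and root: "poly (map_poly of_int f) \<beta> = 0"
    and v: "abs_value_on (rat_field_gen \<beta>) v" and unstable: "unstable_at \<beta> v"
  shows "archimedean_on (rat_field_gen \<beta>) v"
proof -
  have "\<beta> \<noteq> 0" using nonzero_root_if_coeff_0_nonzero[OF a0 root] .
  have mem: "\<beta> \<in> rat_field_gen \<beta>" "inverse \<beta> \<in> rat_field_gen \<beta>"
    using generator_mem_rat_field_gen inverse_mem_rat_field_gen by blast+
  have "1 < v \<beta>"
    using unstable_at_iff_abs_value_gt_one[OF subring_rat_field_gen v mem \<open>\<beta> \<noteq> 0\<close>] unstable by simp
  then show ?thesis
    using abs_value_le_one_of_root_of_unit_lead_coeff[OF subring_rat_field_gen v _ lc root mem(1)]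
    by fastforce
qed

lemma unstable_nonarchimedean_abs_value_exists:
  assumes irr: "irreducible f" and prim: "content f = 1" and a0: "coeff f 0 \<noteq> 0"
    and root: "poly (map_poly of_int f) \<beta> = 0" and p: "prime p" "p dvd lead_coeff f"
  obtains v where "abs_value_on (rat_field_gen \<beta>) v" "unstable_at \<beta> v"
    "\<not> archimedean_on (rat_field_gen \<beta>) v"
proof -
  have "\<beta> \<noteq> 0" using nonzero_root_if_coeff_0_nonzero[OF a0 root] .
  have R0: "subring (poly_adjoin \<int> (inverse \<beta>))" "inverse \<beta> \<in> poly_adjoin \<int> (inverse \<beta>)"
    "of_int p \<in> poly_adjoin \<int> (inverse \<beta>)"
    by (rule subring.subring_poly_adjoin[OF subring_Ints], rule subring.mem_poly_adjoin[OF subring_Ints],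
        rule subsetD[OF subring.subset_poly_adjoin[OF subring_Ints] Ints_of_int])
  obtain V where V: "poly_adjoin \<int> (inverse \<beta>) \<subseteq> V" "valuation_ring V"
    and proper: "1 \<notin> pair_ideal V (of_int p) (inverse \<beta>)"
    by (rule valuation_ring_avoiding_pair_ideal[OF R0(1,3,2)
          one_not_mem_pair_ideal_int_poly_adjoin_inverse[OF irr root \<open>\<beta> \<noteq> 0\<close> p]])
  have "place_above_prime V f \<beta> p"
    by (intro place_above_prime.intro place_above_prime_axioms.intro V(2) root a0 prim p proper
        subsetD[OF V(1) R0(2)])
  then show ?thesis
    using that place_above_prime.abs_value_on_absv place_above_prime.unstable_at_absv
      place_above_prime.not_archimedean_absv by blast
qed

theorem mainTheorem13:
  fixes f :: "int poly" and \<beta> :: complex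
  assumes prim: "content f = 1"
    and a0: "coeff f 0 \<noteq> 0"
    and ad: "lead_coeff f > 0"
    and hyp: "hyperbolic_poly f"
    and irr: "irreducible f"
    and root: "poly (map_poly of_int f) \<beta> = 0"
  shows "(lead_coeff f = 1 \<or> lead_coeff f = -1) \<longleftrightarrow>
         (\<forall>v. abs_value_on (rat_field_gen \<beta>) v \<and> unstable_at \<beta> v
              \<longrightarrow> archimedean_on (rat_field_gen \<beta>) v)"
proof
  assume "lead_coeff f = 1 \<or> lead_coeff f = -1"
  then show "\<forall>v. abs_value_on (rat_field_gen \<beta>) v \<and> unstable_at \<beta> v
              \<longrightarrow> archimedean_on (rat_field_gen \<beta>) v"
    using archimedean_if_unstable_and_unit_lead_coeff a0 root by blast
next
  assume all_archimedean: "\<forall>v. abs_value_on (rat_field_gen \<beta>) v \<and> unstable_at \<beta> v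
                              \<longrightarrow> archimedean_on (rat_field_gen \<beta>) v"
  show "lead_coeff f = 1 \<or> lead_coeff f = -1"
  proof (rule ccontr)
    assume "\<not> (lead_coeff f = 1 \<or> lead_coeff f = -1)"
    then have "\<not> is_unit (lead_coeff f)" "lead_coeff f \<noteq> 0" using a0 by (auto simp: abs_if)
    then obtain p where "prime p" "p dvd lead_coeff f" using prime_divisor_exists by blast
    then obtain v where "abs_value_on (rat_field_gen \<beta>) v" "unstable_at \<beta> v"
      "\<not> archimedean_on (rat_field_gen \<beta>) v"
      using unstable_nonarchimedean_abs_value_exists[OF irr prim a0 root] by blast
    then show False using all_archimedean by blast
  qed
qed

end
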